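(* A finite dismantlable lattice $L$ has nullity $\eta(L)=r$ if and only if $L$ is an adjunct of $r+1$ chains, i.e. $L = C_0\,]_{a_1}^{b_1}\,C_1\,]_{a_2}^{b_2}\,C_2 \cdots ]_{a_r}^{b_r}\,C_r$ for chains $C_0,\dots,C_r$ and adjunct pairs $(a_i,b_i)$.
   Context: The nullity of a graph $G$ is $|E(G)|-|V(G)|+c$ with $c$ the number of connected components; the nullity $\eta(P)$ of a finite poset $P$ is the nullity of its cover graph (the undirected graph on $P$ whose edges are the covering pairs $a\prec b$). Adjunct operation: for disjoint lattices $L_1,L_2$ and $a<b$ in $L_1$ with $b$ not covering $a$, $L_1\,]_{a}^{b}\,L_2$ is $L_1\cup L_2$ ordered by: $x\le y$ iff $x\le y$ in $L_1$ (both in $L_1$), or $x\le y$ in $L_2$ (both in $L_2$), or $x\in L_1,y\in L_2,x\le a$, or $x\in L_2,y\in L_1,b\le y$. Iterated adjuncts are read left to right, each adjunct pair $(a_i,b_i)$ lying in the lattice built so far. A finite lattice $L$ with $n$ elements is dismantlable if there is a chain of sublattices $L_1\subset L_2\subset\cdots\subset L_n=L$ with $|L_i|=i$. (It is known that a finite lattice is dismantlable iff it is an adjunct of chains.) *)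

theory Defs
  imports Main
begin

text \<open>A finite poset/lattice is represented by a carrier set A and an order relation le,
  only the restriction of le to A being relevant.\<close>

definition partial_order_on' :: "'a set \<Rightarrow> ('a \<Rightarrow> 'a \<Rightarrow> bool) \<Rightarrow> bool" where
  "partial_order_on' A le \<longleftrightarrow>
     (\<forall>x\<in>A. le x x) \<and>
     (\<forall>x\<in>A. \<forall>y\<in>A. le x y \<and> le y x \<longrightarrow> x = y) \<and>
     (\<forall>x\<in>A. \<forall>y\<in>A. \<forall>z\<in>A. le x y \<and> le y z \<longrightarrow> le x z)"

definition is_lub :: "'a set \<Rightarrow> ('a \<Rightarrow> 'a \<Rightarrow> bool) \<Rightarrow> 'a \<Rightarrow> 'a \<Rightarrow> 'a \<Rightarrow> bool" where
  "is_lub A le x y z \<longleftrightarrow> z \<in> A \<and> le x z \<and> le y z \<and>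
     (\<forall>w\<in>A. le x w \<and> le y w \<longrightarrow> le z w)"

definition is_glb :: "'a set \<Rightarrow> ('a \<Rightarrow> 'a \<Rightarrow> bool) \<Rightarrow> 'a \<Rightarrow> 'a \<Rightarrow> 'a \<Rightarrow> bool" where
  "is_glb A le x y z \<longleftrightarrow> z \<in> A \<and> le z x \<and> le z y \<and>
     (\<forall>w\<in>A. le w x \<and> le w y \<longrightarrow> le w z)"

definition finite_lattice :: "'a set \<Rightarrow> ('a \<Rightarrow> 'a \<Rightarrow> bool) \<Rightarrow> bool" where
  "finite_lattice A le \<longleftrightarrow> finite A \<and> A \<noteq> {} \<and> partial_order_on' A le \<and>
     (\<forall>x\<in>A. \<forall>y\<in>A. (\<exists>z. is_lub A le x y z) \<and> (\<exists>z. is_glb A le x y z))"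

definition sublattice :: "'a set \<Rightarrow> ('a \<Rightarrow> 'a \<Rightarrow> bool) \<Rightarrow> 'a set \<Rightarrow> bool" where
  "sublattice A le S \<longleftrightarrow> S \<subseteq> A \<and>
     (\<forall>x\<in>S. \<forall>y\<in>S. \<forall>z. (is_lub A le x y z \<longrightarrow> z \<in> S) \<and> (is_glb A le x y z \<longrightarrow> z \<in> S))"

definition dismantlable :: "'a set \<Rightarrow> ('a \<Rightarrow> 'a \<Rightarrow> bool) \<Rightarrow> bool" where
  "dismantlable A le \<longleftrightarrow> finite_lattice A le \<and>
     (\<exists>L :: nat \<Rightarrow> 'a set.
        (\<forall>i\<in>{1..card A}. sublattice A le (L i) \<and> card (L i) = i) \<and>
        (\<forall>i. 1 \<le> i \<and> i < card A \<longrightarrow> L i \<subset> L (Suc i)) \<and>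
        L (card A) = A)"

definition is_chain :: "'a set \<Rightarrow> ('a \<Rightarrow> 'a \<Rightarrow> bool) \<Rightarrow> bool" where
  "is_chain C le \<longleftrightarrow> finite C \<and> C \<noteq> {} \<and> partial_order_on' C le \<and>
     (\<forall>x\<in>C. \<forall>y\<in>C. le x y \<or> le y x)"

definition covers :: "'a set \<Rightarrow> ('a \<Rightarrow> 'a \<Rightarrow> bool) \<Rightarrow> 'a \<Rightarrow> 'a \<Rightarrow> bool" where
  "covers A le a b \<longleftrightarrow> a \<in> A \<and> b \<in> A \<and> le a b \<and> a \<noteq> b \<and>
     \<not> (\<exists>c\<in>A. le a c \<and> le c b \<and> c \<noteq> a \<and> c \<noteq> b)"

definition cover_edges :: "'a set \<Rightarrow> ('a \<Rightarrow> 'a \<Rightarrow> bool) \<Rightarrow> 'a set set" where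
  "cover_edges A le = {{a, b} | a b. covers A le a b}"

definition cover_adj :: "'a set \<Rightarrow> ('a \<Rightarrow> 'a \<Rightarrow> bool) \<Rightarrow> ('a \<times> 'a) set" where
  "cover_adj A le = {(x, y). covers A le x y \<or> covers A le y x}"

definition cover_components :: "'a set \<Rightarrow> ('a \<Rightarrow> 'a \<Rightarrow> bool) \<Rightarrow> 'a set set" where
  "cover_components A le = A // ((cover_adj A le)\<^sup>*)"

definition nullity :: "'a set \<Rightarrow> ('a \<Rightarrow> 'a \<Rightarrow> bool) \<Rightarrow> int" where
  "nullity A le = int (card (cover_edges A le)) - int (card A)
                  + int (card (cover_components A le))"

definition adjunct_rel ::
  "'a set \<Rightarrow> ('a \<Rightarrow> 'a \<Rightarrow> bool) \<Rightarrow> 'a set \<Rightarrow> ('a \<Rightarrow> 'a \<Rightarrow> bool) \<Rightarrow> 'a \<Rightarrow> 'a \<Rightarrow> ('a \<Rightarrow> 'a \<Rightarrow> bool)" where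
  "adjunct_rel A le C leC a b = (\<lambda>x y.
      (x \<in> A \<and> y \<in> A \<and> le x y) \<or> (x \<in> C \<and> y \<in> C \<and> leC x y) \<or>
      (x \<in> A \<and> y \<in> C \<and> le x a) \<or> (x \<in> C \<and> y \<in> A \<and> le b y))"

text \<open>adj_chains A le k: (A, le) is C_0 ]_{a_1}^{b_1} C_1 ... ]_{a_k}^{b_k} C_k for chains C_i,
  built left to right, each adjunct pair lying in the lattice built so far.\<close>
inductive adj_chains :: "'a set \<Rightarrow> ('a \<Rightarrow> 'a \<Rightarrow> bool) \<Rightarrow> nat \<Rightarrow> bool" where
  base: "is_chain C le \<Longrightarrow> adj_chains C le 0"
| step: "\<lbrakk> adj_chains A le k; is_chain C leC; A \<inter> C = {};
           a \<in> A; b \<in> A; le a b; a \<noteq> b; \<not> covers A le a b \<rbrakk>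
         \<Longrightarrow> adj_chains (A \<union> C) (adjunct_rel A le C leC a b) (Suc k)"

definition adjunct_of_chains :: "'a set \<Rightarrow> ('a \<Rightarrow> 'a \<Rightarrow> bool) \<Rightarrow> nat \<Rightarrow> bool" where
  "adjunct_of_chains A le k \<longleftrightarrow>
     (\<exists>le'. adj_chains A le' k \<and> (\<forall>x\<in>A. \<forall>y\<in>A. le x y \<longleftrightarrow> le' x y))"

end

(*
  If a lattice is built from a chain C_0 by adjoining chains C_1, ..., C_r, each step
  L ]_a^b C adds |C| points and |C| + 1 cover edges: the covers of C together with
  a < min C and max C < b.  No old cover disappears, because a < b is not a cover of L.
  Hence an adjunct of r + 1 chains has |E| = |V| - 1 + r, and since the cover graph of a
  lattice is connected its nullity is r.

  Conversely, a dismantlable lattice is an adjunct of chains: add the points of a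
  dismantling one by one.  If x is added to L - {x} and L - {x} is a sublattice of L, then
  x has at most one lower cover p and at most one upper cover q.  If x is the least or
  greatest element it extends the base chain; if p < q is a cover of L - {x}, x subdivides
  it inside the chain carrying that edge; otherwise x is adjoined as a one-point chain at
  (p, q).  Since the number of chains is then forced by the nullity, both directions follow.
*)

theory Submission
  imports Defs
begin

section \<open>Order duality and covers\<close>

lemma po_refl: "partial_order_on' A le \<Longrightarrow> x \<in> A \<Longrightarrow> le x x"
  and po_antisym: "partial_order_on' A le \<Longrightarrow> x \<in> A \<Longrightarrow> y \<in> A \<Longrightarrow> le x y \<Longrightarrow> le y x \<Longrightarrow> x = y"
  and po_trans: "partial_order_on' A le \<Longrightarrow> x \<in> A \<Longrightarrow> y \<in> A \<Longrightarrow> z \<in> A \<Longrightarrow> le x y \<Longrightarrow> le y z \<Longrightarrow> le x z"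
  unfolding partial_order_on'_def by blast+

lemma po_subset: "partial_order_on' A le \<Longrightarrow> S \<subseteq> A \<Longrightarrow> partial_order_on' S le"
  unfolding partial_order_on'_def by blast

lemma partial_order_on'_conversep [simp]: "partial_order_on' A le\<inverse>\<inverse> \<longleftrightarrow> partial_order_on' A le"
  unfolding partial_order_on'_def conversep_iff by blast

lemma is_chain_conversep [simp]: "is_chain C le\<inverse>\<inverse> \<longleftrightarrow> is_chain C le"
  unfolding is_chain_def by auto

lemma covers_conversep [simp]: "covers A le\<inverse>\<inverse> a b \<longleftrightarrow> covers A le b a"
  unfolding covers_def conversep_iff by blast

lemma is_lub_conversep [simp]: "is_lub A le\<inverse>\<inverse> = is_glb A le"
  unfolding is_lub_def is_glb_def conversep_iff by blast

lemma is_glb_conversep [simp]: "is_glb A le\<inverse>\<inverse> = is_lub A le"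
  unfolding is_lub_def is_glb_def conversep_iff by blast

lemma finite_lattice_conversep [simp]: "finite_lattice A le\<inverse>\<inverse> \<longleftrightarrow> finite_lattice A le"
  unfolding finite_lattice_def by auto

lemma sublattice_conversep [simp]: "sublattice A le\<inverse>\<inverse> S \<longleftrightarrow> sublattice A le S"
  unfolding sublattice_def by auto

lemma covers_in: "covers A le a b \<Longrightarrow> a \<in> A \<and> b \<in> A"
  and covers_le: "covers A le a b \<Longrightarrow> le a b \<and> a \<noteq> b"
  and covers_between: "covers A le a b \<Longrightarrow> c \<in> A \<Longrightarrow> le a c \<Longrightarrow> le c b \<Longrightarrow> c = a \<or> c = b"
  unfolding covers_def by blast+

lemma covers_cong:
  "\<forall>u\<in>A. \<forall>v\<in>A. le u v \<longleftrightarrow> le' u v \<Longrightarrow> covers A le p q \<longleftrightarrow> covers A le' p q"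
  unfolding covers_def by (metis (no_types, lifting))

lemma is_chain_singleton: "le y y \<Longrightarrow> is_chain {y} le"
  unfolding is_chain_def partial_order_on'_def by simp

lemma po_has_minimal:
  assumes po: "partial_order_on' A le" and "finite S" "S \<noteq> {}" "S \<subseteq> A"
  shows "\<exists>m\<in>S. \<forall>w\<in>S. le w m \<longrightarrow> w = m"
  using assms(2-4)
proof (induction S rule: finite_ne_induct)
  case (singleton x) then show ?case by blast
next
  case (insert x S)
  then obtain m where m: "m \<in> S" "\<forall>w\<in>S. le w m \<longrightarrow> w = m" by blast
  show ?case
  proof (cases "le x m")
    case True
    have "w = x" if w: "w \<in> S" "le w x" for w
    proof -
      have in_A: "w \<in> A" "x \<in> A" "m \<in> A" using w insert.prems m by auto
      then have "w = m" using w True m po_trans[OF po] by blast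
      then show ?thesis using w True in_A po_antisym[OF po] by blast
    qed
    then show ?thesis by blast
  next
    case False
    then show ?thesis using m by blast
  qed
qed

lemma po_has_maximal:
  "partial_order_on' A le \<Longrightarrow> finite S \<Longrightarrow> S \<noteq> {} \<Longrightarrow> S \<subseteq> A \<Longrightarrow> \<exists>m\<in>S. \<forall>w\<in>S. le m w \<longrightarrow> w = m"
  using po_has_minimal[of A "le\<inverse>\<inverse>" S] by simp

lemma chain_has_least:
  assumes "is_chain C le" shows "\<exists>m\<in>C. \<forall>w\<in>C. le m w"
proof -
  have po: "partial_order_on' C le" and tot: "\<forall>x\<in>C. \<forall>y\<in>C. le x y \<or> le y x"
    using assms by (auto simp: is_chain_def)
  obtain m where "m \<in> C" "\<forall>w\<in>C. le w m \<longrightarrow> w = m"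
    using po_has_minimal[OF po, of C] assms by (auto simp: is_chain_def)
  then show ?thesis using tot po_refl[OF po] by metis
qed

lemma chain_has_greatest: "is_chain C le \<Longrightarrow> \<exists>m\<in>C. \<forall>w\<in>C. le w m"
  using chain_has_least[of C "le\<inverse>\<inverse>"] by simp

lemma lower_cover_exists:
  assumes fin: "finite A" and po: "partial_order_on' A le"
    and "y \<in> A" "x \<in> A" "le y x" "y \<noteq> x"
  shows "\<exists>z\<in>A. le y z \<and> covers A le z x"
proof -
  let ?S = "{z\<in>A. le y z \<and> le z x \<and> z \<noteq> x}"
  have "y \<in> ?S" using assms po_refl[OF po] by blast
  then obtain z where z: "z \<in> ?S" and max: "\<forall>w\<in>?S. le z w \<longrightarrow> w = z"
    using po_has_maximal[OF po, of ?S] fin by fastforce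
  have "c \<in> ?S" if "c \<in> A" "le z c" "le c x" "c \<noteq> x" for c
    using that z assms(3) po_trans[OF po, of y z c] by blast
  then have "covers A le z x"
    unfolding covers_def using z max assms(4) by blast
  then show ?thesis using z by blast
qed

lemma upper_cover_exists:
  "finite A \<Longrightarrow> partial_order_on' A le \<Longrightarrow> x \<in> A \<Longrightarrow> y \<in> A \<Longrightarrow> le x y \<Longrightarrow> x \<noteq> y \<Longrightarrow>
    \<exists>z\<in>A. le z y \<and> covers A le x z"
  using lower_cover_exists[of A "le\<inverse>\<inverse>" y x] by auto

section \<open>The cover graph of a finite lattice is connected\<close>

lemma cover_adj_sym: "sym (cover_adj A le)"
  by (auto simp: cover_adj_def intro: symI)

lemma cover_adj_rtrancl_in:
  "(x, y) \<in> (cover_adj A le)\<^sup>* \<Longrightarrow> x \<in> A \<Longrightarrow> y \<in> A"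
  by (induction rule: rtrancl_induct) (auto simp: cover_adj_def covers_def)

lemma cover_adj_rtrancl_if_le:
  assumes fin: "finite A" and po: "partial_order_on' A le"
    and y: "y \<in> A" and x: "x \<in> A" and yx: "le y x"
  shows "(y, x) \<in> (cover_adj A le)\<^sup>*"
proof -
  let ?B = "{z\<in>A. le y z \<and> le z x \<and> (y, z) \<in> (cover_adj A le)\<^sup>*}"
  have "y \<in> ?B" using y yx po_refl[OF po] by blast
  then obtain m where m: "m \<in> ?B" and max: "\<forall>w\<in>?B. le m w \<longrightarrow> w = m"
    using po_has_maximal[OF po, of ?B] fin by fastforce
  have "m = x"
  proof (rule ccontr)
    assume "m \<noteq> x"
    then obtain z where z: "z \<in> A" "le z x" "covers A le m z"
      using upper_cover_exists[OF fin po, of m x] m x by blast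
    have "le y z" using m z covers_le[OF z(3)] y po_trans[OF po, of y m z] by blast
    moreover have "(y, z) \<in> (cover_adj A le)\<^sup>*"
      using m z(3) by (auto simp: cover_adj_def intro: rtrancl_into_rtrancl)
    ultimately have "z \<in> ?B" using z by blast
    then show False using max covers_le[OF z(3)] by blast
  qed
  then show ?thesis using m by blast
qed

lemma cover_components_finite_lattice:
  assumes "finite_lattice A le"
  shows "cover_components A le = {A}"
proof -
  have fin: "finite A" and po: "partial_order_on' A le" and ne: "A \<noteq> {}"
    using assms unfolding finite_lattice_def by blast+
  have conn: "(x, y) \<in> (cover_adj A le)\<^sup>*" if xy: "x \<in> A" "y \<in> A" for x y
  proof -
    obtain g where "is_glb A le x y g" using assms xy unfolding finite_lattice_def by blast
    then have g: "g \<in> A" "le g x" "le g y" unfolding is_glb_def by blast+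
    have "(g, x) \<in> (cover_adj A le)\<^sup>*"
      using cover_adj_rtrancl_if_le[OF fin po g(1) xy(1) g(2)] .
    then have "(x, g) \<in> (cover_adj A le)\<^sup>*"
      by (rule symD[OF sym_rtrancl[OF cover_adj_sym]])
    also have "(g, y) \<in> (cover_adj A le)\<^sup>*"
      using cover_adj_rtrancl_if_le[OF fin po g(1) xy(2) g(3)] .
    finally show ?thesis .
  qed
  have "(cover_adj A le)\<^sup>* `` {x} = A" if "x \<in> A" for x
    using that conn cover_adj_rtrancl_in by (auto simp: Image_singleton)
  then show ?thesis
    unfolding cover_components_def quotient_def using ne by auto
qed

lemma nullity_finite_lattice:
  "finite_lattice A le \<Longrightarrow> nullity A le = int (card (cover_edges A le)) - int (card A) + 1"
  by (simp add: nullity_def cover_components_finite_lattice)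

section \<open>Cover edges of an adjunct of chains\<close>

lemma cover_edges_subset_Pow: "cover_edges A le \<subseteq> Pow A"
  unfolding cover_edges_def using covers_in by fastforce

lemma finite_cover_edges: "finite A \<Longrightarrow> finite (cover_edges A le)"
  using cover_edges_subset_Pow by (meson finite_Pow_iff finite_subset)

lemma chain_lower_cover_unique:
  assumes ch: "is_chain C le" and "covers C le u v" "covers C le u' v"
  shows "u = u'"
proof -
  have "u \<in> C" "u' \<in> C" "le u v" "le u' v" "u \<noteq> v" "u' \<noteq> v"
    using assms(2,3) covers_in covers_le by metis+
  moreover have "le u u' \<or> le u' u" using ch calculation unfolding is_chain_def by blast
  ultimately show ?thesis using covers_between[OF assms(2)] covers_between[OF assms(3)] by metis
qed

lemma cover_edges_chain:
  assumes ch: "is_chain C le" and m: "m \<in> C" "\<forall>w\<in>C. le m w"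
    and lower: "\<And>v. v \<in> C - {m} \<Longrightarrow> covers C le (lower v) v"
  shows "cover_edges C le = (\<lambda>v. {lower v, v}) ` (C - {m})"
proof
  have po: "partial_order_on' C le" using ch by (simp add: is_chain_def)
  show "cover_edges C le \<subseteq> (\<lambda>v. {lower v, v}) ` (C - {m})"
  proof
    fix e assume "e \<in> cover_edges C le"
    then obtain u v where e: "e = {u, v}" and uv: "covers C le u v"
      unfolding cover_edges_def by blast
    have "v \<noteq> m" using uv m po_antisym[OF po] covers_in covers_le by metis
    then have v: "v \<in> C - {m}" using covers_in[OF uv] by blast
    have "lower v = u" using chain_lower_cover_unique[OF ch lower[OF v] uv] .
    then show "e \<in> (\<lambda>v. {lower v, v}) ` (C - {m})" using e v by blast
  qed
  show "(\<lambda>v. {lower v, v}) ` (C - {m}) \<subseteq> cover_edges C le"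
    using lower unfolding cover_edges_def by blast
qed

lemma card_cover_edges_chain:
  assumes ch: "is_chain C le"
  shows "card (cover_edges C le) + 1 = card C"
proof -
  have po: "partial_order_on' C le" and fin: "finite C"
    using ch by (auto simp: is_chain_def)
  obtain m where m: "m \<in> C" "\<forall>w\<in>C. le m w" using chain_has_least[OF ch] by blast
  define lower where "lower v = (SOME u. covers C le u v)" for v
  have lower: "covers C le (lower v) v" if "v \<in> C - {m}" for v
  proof -
    have "\<exists>u. covers C le u v"
      using lower_cover_exists[OF fin po m(1)] that m by blast
    then show ?thesis unfolding lower_def by (rule someI_ex)
  qed
  have "inj_on (\<lambda>v. {lower v, v}) (C - {m})"
  proof
    fix v w assume v: "v \<in> C - {m}" and w: "w \<in> C - {m}" and eq: "{lower v, v} = {lower w, w}"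
    show "v = w"
    proof (rule ccontr)
      assume "v \<noteq> w"
      then have "v = lower w" "w = lower v" using eq by (auto simp: doubleton_eq_iff)
      then have "le v w" "le w v" using lower[OF v] lower[OF w] covers_le by metis+
      then show False using po_antisym[OF po] v w \<open>v \<noteq> w\<close> by blast
    qed
  qed
  then have "card (cover_edges C le) = card (C - {m})"
    using cover_edges_chain[OF ch m lower] card_image by metis
  moreover have "card C > 0" using m fin card_gt_0_iff by blast
  ultimately show ?thesis using m fin by simp
qed

lemma adjunct_rel_simps:
  assumes "A \<inter> C = {}"
  shows "u \<in> A \<Longrightarrow> v \<in> A \<Longrightarrow> adjunct_rel A le C leC a b u v \<longleftrightarrow> le u v"
    and "u \<in> C \<Longrightarrow> v \<in> C \<Longrightarrow> adjunct_rel A le C leC a b u v \<longleftrightarrow> leC u v"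
    and "u \<in> A \<Longrightarrow> v \<in> C \<Longrightarrow> adjunct_rel A le C leC a b u v \<longleftrightarrow> le u a"
    and "u \<in> C \<Longrightarrow> v \<in> A \<Longrightarrow> adjunct_rel A le C leC a b u v \<longleftrightarrow> le b v"
  using assms unfolding adjunct_rel_def by blast+

lemma adjunct_rel_conversep:
  "(adjunct_rel A le C leC a b)\<inverse>\<inverse> = adjunct_rel A le\<inverse>\<inverse> C leC\<inverse>\<inverse> b a"
  unfolding adjunct_rel_def by (intro ext) auto

locale chain_adjunct =
  fixes A le C leC a b
  assumes po: "partial_order_on' A le" and chain: "is_chain C leC" and disjoint: "A \<inter> C = {}"
    and a_in: "a \<in> A" and b_in: "b \<in> A" and a_le_b: "le a b" and a_ne_b: "a \<noteq> b"
    and not_covers: "\<not> covers A le a b"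
begin

abbreviation "R \<equiv> adjunct_rel A le C leC a b"

lemmas R_AA = adjunct_rel_simps(1)[OF disjoint, where le = le and leC = leC and a = a and b = b]
  and R_CC = adjunct_rel_simps(2)[OF disjoint, where le = le and leC = leC and a = a and b = b]
  and R_AC = adjunct_rel_simps(3)[OF disjoint, where le = le and leC = leC and a = a and b = b]
  and R_CA = adjunct_rel_simps(4)[OF disjoint, where le = le and leC = leC and a = a and b = b]

lemma po_chain: "partial_order_on' C leC"
  using chain by (simp add: is_chain_def)

lemma chain_adjunct_dual: "chain_adjunct A le\<inverse>\<inverse> C leC\<inverse>\<inverse> b a"
  using po chain disjoint a_in b_in a_le_b a_ne_b not_covers by unfold_locales auto

lemma covers_adjunct_AA:
  assumes u: "u \<in> A" and v: "v \<in> A"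
  shows "covers (A \<union> C) R u v \<longleftrightarrow> covers A le u v"
proof
  assume "covers (A \<union> C) R u v"
  then show "covers A le u v" using u v R_AA unfolding covers_def by auto
next
  assume cov: "covers A le u v"
  \<comment> \<open>a point of C between u and v forces u \<le> a < b \<le> v, i.e. (u, v) = (a, b), not a cover\<close>
  have no_C_between: False if c: "c \<in> C" "R u c" "R c v" for c
  proof -
    have "le u a" "le b v" using c u v R_AC R_CA by auto
    then have "le a v" "le u b"
      using po_trans[OF po] u v a_in b_in a_le_b by blast+
    then have "a = u \<or> a = v" "b = u \<or> b = v"
      using covers_between[OF cov] a_in b_in \<open>le u a\<close> \<open>le b v\<close> by blast+
    then show False
      using cov not_covers a_ne_b a_le_b po_antisym[OF po a_in b_in] covers_le[OF cov] by metis
  qed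
  show "covers (A \<union> C) R u v"
    using cov u v R_AA no_C_between unfolding covers_def by blast
qed

lemma covers_adjunct_CC:
  assumes u: "u \<in> C" and v: "v \<in> C"
  shows "covers (A \<union> C) R u v \<longleftrightarrow> covers C leC u v"
proof -
  have "\<not> (R u c \<and> R c v)" if "c \<in> A" for c
    using that u v R_AC R_CA po_trans[OF po b_in that a_in] po_antisym[OF po a_in b_in]
      a_le_b a_ne_b by auto
  then show ?thesis using u v R_CC unfolding covers_def by blast
qed

lemma covers_adjunct_AC:
  assumes u: "u \<in> A" and v: "v \<in> C" and m: "m \<in> C" and least: "\<forall>w\<in>C. leC m w"
  shows "covers (A \<union> C) R u v \<longleftrightarrow> u = a \<and> v = m"
proof
  assume cov: "covers (A \<union> C) R u v"
  have "R u a" "R a v" "R u m" "R m v"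
    using covers_le[OF cov] u v m least a_in R_AA R_AC R_CC po_refl[OF po] by auto
  then show "u = a \<and> v = m"
    using covers_between[OF cov] a_in m disjoint u v by blast
next
  assume "u = a \<and> v = m"
  moreover have "c = a" if "c \<in> A" "le a c" "le c a" for c
    using that po_antisym[OF po a_in] by blast
  moreover have "c = m" if "c \<in> C" "leC c m" for c
    using that least m po_antisym[OF po_chain] by blast
  ultimately show "covers (A \<union> C) R u v"
    using m a_in disjoint R_AA R_AC R_CC po_refl[OF po] unfolding covers_def by auto
qed

lemma covers_adjunct_CA:
  assumes u: "u \<in> C" and v: "v \<in> A" and M: "M \<in> C" and greatest: "\<forall>w\<in>C. leC w M"
  shows "covers (A \<union> C) R u v \<longleftrightarrow> u = M \<and> v = b"
proof -
  interpret dual: chain_adjunct A "le\<inverse>\<inverse>" C "leC\<inverse>\<inverse>" b a by (rule chain_adjunct_dual)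
  have "covers (A \<union> C) R u v \<longleftrightarrow> covers (A \<union> C) R\<inverse>\<inverse> v u" by simp
  also have "\<dots> \<longleftrightarrow> v = b \<and> u = M"
    unfolding adjunct_rel_conversep using dual.covers_adjunct_AC[OF v u M] greatest by simp
  finally show ?thesis by blast
qed

lemma covers_adjunct_iff:
  assumes least: "m \<in> C" "\<forall>w\<in>C. leC m w" and greatest: "M \<in> C" "\<forall>w\<in>C. leC w M"
  shows "covers (A \<union> C) R u v \<longleftrightarrow>
    covers A le u v \<or> covers C leC u v \<or> (u = a \<and> v = m) \<or> (u = M \<and> v = b)"
proof (cases "u \<in> A \<union> C \<and> v \<in> A \<union> C")
  case True
  then consider "u \<in> A" "v \<in> A" | "u \<in> C" "v \<in> C" | "u \<in> A" "v \<in> C" | "u \<in> C" "v \<in> A"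
    by blast
  then show ?thesis
  proof cases
    case 1 then show ?thesis
      using covers_adjunct_AA disjoint least(1) greatest(1) covers_in[of C leC u v] by blast
  next
    case 2 then show ?thesis
      using covers_adjunct_CC disjoint a_in b_in covers_in[of A le u v] by blast
  next
    case 3 then show ?thesis
      using covers_adjunct_AC[OF _ _ least] disjoint b_in
        covers_in[of A le u v] covers_in[of C leC u v] by blast
  next
    case 4 then show ?thesis
      using covers_adjunct_CA[OF _ _ greatest] disjoint a_in
        covers_in[of A le u v] covers_in[of C leC u v] by blast
  qed
next
  case False
  then show ?thesis
    using covers_in[of "A \<union> C" R u v] covers_in[of A le u v] covers_in[of C leC u v]
      a_in b_in least(1) greatest(1) by blast
qed

lemma cover_edges_adjunct:
  assumes least: "m \<in> C" "\<forall>w\<in>C. leC m w" and greatest: "M \<in> C" "\<forall>w\<in>C. leC w M"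
  shows "cover_edges (A \<union> C) R = cover_edges A le \<union> cover_edges C leC \<union> {{a, m}, {M, b}}"
  unfolding cover_edges_def covers_adjunct_iff[OF least greatest] by blast

lemma card_cover_edges_adjunct:
  assumes fin: "finite A"
  shows "card (cover_edges (A \<union> C) R) = card (cover_edges A le) + card (cover_edges C leC) + 2"
proof -
  obtain m where m: "m \<in> C" "\<forall>w\<in>C. leC m w" using chain_has_least[OF chain] by blast
  obtain M where M: "M \<in> C" "\<forall>w\<in>C. leC w M" using chain_has_greatest[OF chain] by blast
  have fin_edges: "finite (cover_edges A le)" "finite (cover_edges C leC)"
    using finite_cover_edges fin chain by (auto simp: is_chain_def)
  have "cover_edges A le \<inter> cover_edges C leC = {}"
    using cover_edges_subset_Pow[of A le] cover_edges_subset_Pow[of C leC] disjoint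
    unfolding cover_edges_def by blast
  moreover have "(cover_edges A le \<union> cover_edges C leC) \<inter> {{a, m}, {M, b}} = {}"
    using cover_edges_subset_Pow[of A le] cover_edges_subset_Pow[of C leC] disjoint
      m(1) M(1) a_in b_in by blast
  moreover have "{a, m} \<noteq> {M, b}" using disjoint m(1) M(1) a_in a_ne_b by (auto simp: doubleton_eq_iff)
  ultimately show ?thesis
    unfolding cover_edges_adjunct[OF m M] using fin_edges
    by (simp add: card_Un_disjoint)
qed

end

lemma partial_order_adjunct_rel:
  assumes "partial_order_on' A le" "partial_order_on' C leC" "A \<inter> C = {}"
    "a \<in> A" "b \<in> A" "le a b" "a \<noteq> b"
  shows "partial_order_on' (A \<union> C) (adjunct_rel A le C leC a b)"
  using assms unfolding partial_order_on'_def adjunct_rel_def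
  by (smt (verit) disjoint_iff UnE)

lemma adj_chains_po:
  "adj_chains A R k \<Longrightarrow> partial_order_on' A R \<and> finite A \<and> A \<noteq> {}"
proof (induction rule: adj_chains.induct)
  case (base C le) then show ?case by (auto simp: is_chain_def)
next
  case (step A le k C leC a b)
  then show ?case
    using partial_order_adjunct_rel[of A le C leC a b] by (auto simp: is_chain_def)
qed

lemma adj_chains_chain_adjunct:
  assumes "adj_chains A le k" "is_chain C leC" "A \<inter> C = {}" "a \<in> A" "b \<in> A" "le a b"
    "a \<noteq> b" "\<not> covers A le a b"
  shows "chain_adjunct A le C leC a b"
  using assms adj_chains_po[OF assms(1)] by unfold_locales auto

lemma card_cover_edges_adj_chains:
  "adj_chains S R k \<Longrightarrow> card (cover_edges S R) + 1 = card S + k"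
proof (induction rule: adj_chains.induct)
  case (base C le)
  then show ?case using card_cover_edges_chain by simp
next
  case (step A le k C leC a b)
  interpret chain_adjunct A le C leC a b
    using adj_chains_chain_adjunct[OF step.hyps] .
  have "finite A" "finite C" using adj_chains_po[OF step.hyps(1)] chain by (auto simp: is_chain_def)
  then show ?case
    using card_cover_edges_adjunct step.IH card_cover_edges_chain[OF chain] disjoint
    by (simp add: card_Un_disjoint)
qed

lemma nullity_adjunct_of_chains:
  assumes "finite_lattice A le" and "adjunct_of_chains A le r"
  shows "nullity A le = int r"
proof -
  obtain le' where le': "adj_chains A le' r" "\<forall>x\<in>A. \<forall>y\<in>A. le x y \<longleftrightarrow> le' x y"
    using assms(2) unfolding adjunct_of_chains_def by blast
  have "cover_edges A le = cover_edges A le'"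
    unfolding cover_edges_def using covers_cong[OF le'(2)] by simp
  then show ?thesis
    using card_cover_edges_adj_chains[OF le'(1)] nullity_finite_lattice[OF assms(1)] by simp
qed

section \<open>Inserting a point into an adjunct of chains\<close>

(* adj_chains fixes its relations also outside their carriers, so relations are only
   compared on the carrier. *)
definition agree_on :: "'a set \<Rightarrow> ('a \<Rightarrow> 'a \<Rightarrow> bool) \<Rightarrow> ('a \<Rightarrow> 'a \<Rightarrow> bool) \<Rightarrow> bool" where
  "agree_on S R R' \<longleftrightarrow> (\<forall>u\<in>S. \<forall>v\<in>S. R u v \<longleftrightarrow> R' u v)"

definition insert_rel ::
  "'a set \<Rightarrow> ('a \<Rightarrow> 'a \<Rightarrow> bool) \<Rightarrow> 'a \<Rightarrow> 'a set \<Rightarrow> 'a set \<Rightarrow> ('a \<Rightarrow> 'a \<Rightarrow> bool)" where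
  "insert_rel S R x D U = (\<lambda>u v. (u \<in> S \<and> v \<in> S \<and> R u v) \<or> (u = x \<and> v = x) \<or>
      (u \<in> S \<and> u \<in> D \<and> v = x) \<or> (u = x \<and> v \<in> S \<and> v \<in> U))"

lemma insert_rel_simps:
  assumes "x \<notin> S"
  shows "u \<in> S \<Longrightarrow> v \<in> S \<Longrightarrow> insert_rel S R x D U u v \<longleftrightarrow> R u v"
    and "u \<in> S \<Longrightarrow> insert_rel S R x D U u x \<longleftrightarrow> u \<in> D"
    and "v \<in> S \<Longrightarrow> insert_rel S R x D U x v \<longleftrightarrow> v \<in> U"
    and "insert_rel S R x D U x x"
  using assms unfolding insert_rel_def by auto

lemma partial_order_insert_rel:
  assumes po: "partial_order_on' S le" and x: "x \<notin> S" and DU: "D \<inter> U = {}"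
    and D_le_U: "\<forall>u\<in>D. \<forall>v\<in>U. le u v"
    and down: "\<And>u w. u \<in> D \<Longrightarrow> w \<in> S \<Longrightarrow> le w u \<Longrightarrow> w \<in> D"
    and up: "\<And>u w. u \<in> U \<Longrightarrow> w \<in> S \<Longrightarrow> le u w \<Longrightarrow> w \<in> U"
  shows "partial_order_on' (insert x S) (insert_rel S le x D U)"
proof -
  let ?R = "insert_rel S le x D U"
  note R = insert_rel_simps[OF x, where R = le and D = D and U = U]
  show ?thesis
    unfolding partial_order_on'_def
  proof (intro conjI ballI impI)
    fix u assume "u \<in> insert x S"
    then show "?R u u" using R po_refl[OF po] by auto
  next
    fix u v assume "u \<in> insert x S" "v \<in> insert x S" "?R u v \<and> ?R v u"
    then show "u = v" using R DU po_antisym[OF po, of u v] by auto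
  next
    fix u v w assume uvw: "u \<in> insert x S" "v \<in> insert x S" "w \<in> insert x S" "?R u v \<and> ?R v w"
    show "?R u w"
    proof (cases "v = x")
      case True
      then show ?thesis using uvw R D_le_U by auto
    next
      case False
      then show ?thesis using uvw R down up po_trans[OF po, of u v w] by auto
    qed
  qed
qed

lemma chain_insert:
  assumes ch: "is_chain C le" and x: "x \<notin> C" and DU: "D \<union> U = C" "D \<inter> U = {}"
    and D_le_U: "\<forall>u\<in>D. \<forall>v\<in>U. le u v"
  shows "is_chain (insert x C) (insert_rel C le x D U)"
proof -
  let ?R = "insert_rel C le x D U"
  note R = insert_rel_simps[OF x, where R = le and D = D and U = U]
  have po: "partial_order_on' C le" and tot: "\<forall>u\<in>C. \<forall>v\<in>C. le u v \<or> le v u"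
    using ch by (auto simp: is_chain_def)
  have down: "w \<in> D" if u: "u \<in> D" and w: "w \<in> C" "le w u" for u w
  proof (rule ccontr)
    assume "w \<notin> D"
    then have "le u w" using D_le_U DU u w by blast
    then show False using po_antisym[OF po, of u w] u w DU \<open>w \<notin> D\<close> by blast
  qed
  have up: "w \<in> U" if u: "u \<in> U" and w: "w \<in> C" "le u w" for u w
  proof (rule ccontr)
    assume "w \<notin> U"
    then have "le w u" using D_le_U DU u w by blast
    then show False using po_antisym[OF po, of u w] u w DU \<open>w \<notin> U\<close> by blast
  qed
  have "?R u v \<or> ?R v u" if uv: "u \<in> insert x C" "v \<in> insert x C" for u v
  proof (cases "u \<in> C \<and> v \<in> C")
    case True
    then show ?thesis using R(1) tot by auto
  next
    case False
    then consider "u = x" "v = x" | "u = x" "v \<in> C" | "u \<in> C" "v = x" using uv by blast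
    then show ?thesis
    proof cases
      case 1 then show ?thesis using R(4) by simp
    next
      case 2 then show ?thesis using R(2,3) DU(1) by blast
    next
      case 3 then show ?thesis using R(2,3) DU(1) by blast
    qed
  qed
  moreover have "partial_order_on' (insert x C) ?R"
    using partial_order_insert_rel[OF po x DU(2) D_le_U] down up by blast
  ultimately show ?thesis
    using ch unfolding is_chain_def by blast
qed

lemma agree_on_insert_rel_simps:
  assumes "agree_on (insert x S) R (insert_rel S le x D U)" "x \<notin> S"
  shows "u \<in> S \<Longrightarrow> v \<in> S \<Longrightarrow> R u v \<longleftrightarrow> le u v"
    and "u \<in> S \<Longrightarrow> R u x \<longleftrightarrow> u \<in> D"
    and "v \<in> S \<Longrightarrow> R x v \<longleftrightarrow> v \<in> U"
    and "R x x"
  using assms unfolding agree_on_def insert_rel_def by auto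

lemma agree_on_adjunct_insert_left:
  assumes disj: "A \<inter> C = {}" and x: "x \<notin> A" "x \<notin> C" and a: "a \<in> A" and b: "b \<in> A"
    and ag: "agree_on (insert x A) R0 (insert_rel A le x D0 U0)"
    and D: "\<forall>u\<in>A. u \<in> D \<longleftrightarrow> u \<in> D0" "\<forall>u\<in>C. u \<in> D \<longleftrightarrow> b \<in> D0"
    and U: "\<forall>v\<in>A. v \<in> U \<longleftrightarrow> v \<in> U0" "\<forall>v\<in>C. v \<in> U \<longleftrightarrow> a \<in> U0"
  shows "agree_on (insert x (A \<union> C)) (adjunct_rel (insert x A) R0 C leC a b)
           (insert_rel (A \<union> C) (adjunct_rel A le C leC a b) x D U)"
  unfolding agree_on_def
proof (intro ballI)
  fix u v assume "u \<in> insert x (A \<union> C)" "v \<in> insert x (A \<union> C)"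
  then have "u = x \<or> u \<in> A \<or> u \<in> C" "v = x \<or> v \<in> A \<or> v \<in> C" by blast+
  moreover note adjunct_rel_simps[of "insert x A" C] adjunct_rel_simps[OF disj]
    insert_rel_simps[of x "A \<union> C"] agree_on_insert_rel_simps[OF ag x(1)]
  ultimately show "adjunct_rel (insert x A) R0 C leC a b u v \<longleftrightarrow>
      insert_rel (A \<union> C) (adjunct_rel A le C leC a b) x D U u v"
    using disj x a b D U by (elim disjE) simp_all
qed

lemma agree_on_adjunct_insert_right:
  assumes disj: "A \<inter> C = {}" and x: "x \<notin> A" "x \<notin> C"
    and D: "\<forall>u\<in>A. u \<in> D \<longleftrightarrow> le u a" "\<forall>u\<in>C. u \<in> D \<longleftrightarrow> u \<in> D1"
    and U: "\<forall>v\<in>A. v \<in> U \<longleftrightarrow> le b v" "\<forall>v\<in>C. v \<in> U \<longleftrightarrow> v \<in> U1"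
  shows "agree_on (insert x (A \<union> C)) (adjunct_rel A le (insert x C) (insert_rel C leC x D1 U1) a b)
           (insert_rel (A \<union> C) (adjunct_rel A le C leC a b) x D U)"
  unfolding agree_on_def
proof (intro ballI)
  fix u v assume "u \<in> insert x (A \<union> C)" "v \<in> insert x (A \<union> C)"
  then have "u = x \<or> u \<in> A \<or> u \<in> C" "v = x \<or> v \<in> A \<or> v \<in> C" by blast+
  moreover note adjunct_rel_simps[of A "insert x C"] adjunct_rel_simps[OF disj]
    insert_rel_simps[of x "A \<union> C"] insert_rel_simps[of x C]
  ultimately show "adjunct_rel A le (insert x C) (insert_rel C leC x D1 U1) a b u v \<longleftrightarrow>
      insert_rel (A \<union> C) (adjunct_rel A le C leC a b) x D U u v"
    using disj x D U by (elim disjE) simp_all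
qed

lemma adjunct_of_chains_iff:
  "adjunct_of_chains S le k \<longleftrightarrow> (\<exists>le'. adj_chains S le' k \<and> agree_on S le' le)"
  unfolding adjunct_of_chains_def agree_on_def by auto

lemma adj_chains_adjunct_insert_left:
  assumes step: "adj_chains A le k" "is_chain C leC" "A \<inter> C = {}" "a \<in> A" "b \<in> A" "le a b"
      "a \<noteq> b" "\<not> covers A le a b"
    and x: "x \<notin> A \<union> C"
    and R0: "adj_chains (insert x A) R0 k" "agree_on (insert x A) R0 (insert_rel A le x D0 U0)"
  shows "adj_chains (insert x (A \<union> C)) (adjunct_rel (insert x A) R0 C leC a b) (Suc k)"
proof -
  note R0_simps = agree_on_insert_rel_simps[OF R0(2)]
  obtain c where c: "c \<in> A" "le a c" "le c b" "c \<noteq> a" "c \<noteq> b"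
    using step(4-8) unfolding covers_def by blast
  then have "\<not> covers (insert x A) R0 a b"
    using R0_simps(1) x step(4,5) covers_between[of "insert x A" R0 a b c] by auto
  moreover have "R0 a b" using R0_simps(1) x step(4-6) by auto
  moreover have "insert x A \<union> C = insert x (A \<union> C)" by blast
  ultimately show ?thesis
    using adj_chains.step[OF R0(1) step(2), of a b] step(3-5,7) x by auto
qed

lemma adjunct_of_chains_insert_extreme:
  "adj_chains S le k \<Longrightarrow> x \<notin> S \<Longrightarrow> (D = S \<and> U = {}) \<or> (D = {} \<and> U = S) \<Longrightarrow>
    adjunct_of_chains (insert x S) (insert_rel S le x D U) k"
proof (induction arbitrary: D U rule: adj_chains.induct)
  case (base C le)
  then have "is_chain (insert x C) (insert_rel C le x D U)"
    using chain_insert[OF base.hyps base.prems(1)] by auto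
  then show ?case
    unfolding adjunct_of_chains_def using adj_chains.base by blast
next
  case (step A le k C leC a b)
  obtain R0 where R0: "adj_chains (insert x A) R0 k"
      "agree_on (insert x A) R0 (insert_rel A le x (D \<inter> A) (U \<inter> A))"
    using step.IH[of "D \<inter> A" "U \<inter> A"] step.prems unfolding adjunct_of_chains_iff by blast
  have "agree_on (insert x (A \<union> C)) (adjunct_rel (insert x A) R0 C leC a b)
      (insert_rel (A \<union> C) (adjunct_rel A le C leC a b) x D U)"
    using agree_on_adjunct_insert_left[OF step.hyps(3) _ _ step.hyps(4,5) R0(2)] step by auto
  then show ?case
    unfolding adjunct_of_chains_iff
    using adj_chains_adjunct_insert_left[OF step.hyps step.prems(1) R0] by blast
qed

lemma insert_rel_restrict:
  "insert_rel S R x {u\<in>S. P u} {v\<in>S. Q v} = insert_rel S R x {u. P u} {v. Q v}"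
  unfolding insert_rel_def by (intro ext) auto

lemma chain_insert_cover:
  assumes ch: "is_chain C le" and x: "x \<notin> C" and cov: "covers C le p q"
  shows "is_chain (insert x C) (insert_rel C le x {u. le u p} {v. le q v})"
proof -
  have po: "partial_order_on' C le" and tot: "\<forall>u\<in>C. \<forall>v\<in>C. le u v \<or> le v u"
    using ch by (auto simp: is_chain_def)
  have p: "p \<in> C" and q: "q \<in> C" and pq: "le p q" "p \<noteq> q"
    using covers_in[OF cov] covers_le[OF cov] by auto
  have "le u p \<or> le q u" if u: "u \<in> C" for u
  proof (cases "le u p")
    case False
    then have "le p u" using tot u p by blast
    moreover have "u \<noteq> p" using False po_refl[OF po p] by blast
    ultimately have "\<not> le u q \<or> u = q" using covers_between[OF cov u] by blast
    then show ?thesis using tot u q po_refl[OF po q] by blast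
  qed simp
  then have "{u\<in>C. le u p} \<union> {v\<in>C. le q v} = C" by blast
  moreover have "\<not> (le u p \<and> le q u)" if u: "u \<in> C" for u
    using po_trans[OF po q u p] po_antisym[OF po p q] pq by blast
  then have "{u\<in>C. le u p} \<inter> {v\<in>C. le q v} = {}" by blast
  moreover have "le u v" if "u \<in> C" "v \<in> C" "le u p" "le q v" for u v
    using po_trans[OF po that(1) p q] po_trans[OF po that(1) q that(2)] that pq(1) by blast
  then have "\<forall>u\<in>{u\<in>C. le u p}. \<forall>v\<in>{v\<in>C. le q v}. le u v" by blast
  ultimately have "is_chain (insert x C) (insert_rel C le x {u\<in>C. le u p} {v\<in>C. le q v})"
    by (rule chain_insert[OF ch x])
  then show ?thesis by (simp only: insert_rel_restrict)
qed

context chain_adjunct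
begin

lemma adjunct_of_chains_insert_cover_in_chain:
  assumes adj: "adj_chains A le k" and x: "x \<notin> A" "x \<notin> C"
    and cov: "covers (A \<union> C) R p q" and not_cov: "\<not> covers A le p q"
  shows "adjunct_of_chains (insert x (A \<union> C)) (insert_rel (A \<union> C) R x {u. R u p} {v. R q v}) (Suc k)"
proof -
  note R = R_AA R_CC R_AC R_CA
  obtain m where m: "m \<in> C" "\<forall>w\<in>C. leC m w" using chain_has_least[OF chain] by blast
  obtain M where M: "M \<in> C" "\<forall>w\<in>C. leC w M" using chain_has_greatest[OF chain] by blast
  have b_a: "\<not> le b a" using po_antisym[OF po a_in b_in a_le_b] a_ne_b by blast
  have insert_C: "adjunct_of_chains (insert x (A \<union> C)) (insert_rel (A \<union> C) R x {u. R u p} {v. R q v})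
      (Suc k)"
    if "is_chain (insert x C) (insert_rel C leC x D1 U1)"
      "agree_on (insert x (A \<union> C)) (adjunct_rel A le (insert x C) (insert_rel C leC x D1 U1) a b)
         (insert_rel (A \<union> C) R x {u. R u p} {v. R q v})" for D1 U1
  proof -
    have "A \<inter> insert x C = {}" using disjoint x by blast
    then have "adj_chains (A \<union> insert x C)
        (adjunct_rel A le (insert x C) (insert_rel C leC x D1 U1) a b) (Suc k)"
      using adj_chains.step[OF adj that(1)] a_in b_in a_le_b a_ne_b not_covers by blast
    then show ?thesis
      unfolding adjunct_of_chains_iff using that(2) by (metis Un_insert_right)
  qed
  consider "covers C leC p q" | "p = a" "q = m" | "p = M" "q = b"
    using covers_adjunct_iff[OF m M] cov not_cov by blast
  then show ?thesis
  proof cases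
    case 1
    have pq: "p \<in> C" "q \<in> C" using covers_in[OF 1] by auto
    show ?thesis
      by (rule insert_C[OF chain_insert_cover[OF chain x(2) 1]],
          rule agree_on_adjunct_insert_right[OF disjoint x]) (use pq R in auto)
  next
    case 2
    have "is_chain (insert x C) (insert_rel C leC x {} C)"
      using chain_insert[OF chain x(2)] by auto
    then show ?thesis
      by (rule insert_C, intro agree_on_adjunct_insert_right[OF disjoint x])
        (use 2 m a_in b_a R po_refl[OF po] in auto)
  next
    case 3
    have "is_chain (insert x C) (insert_rel C leC x C {})"
      using chain_insert[OF chain x(2)] by auto
    then show ?thesis
      by (rule insert_C, intro agree_on_adjunct_insert_right[OF disjoint x])
        (use 3 M b_in b_a R po_refl[OF po] in auto)
  qed
qed

end

lemma adjunct_of_chains_insert_cover: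
  "adj_chains S le k \<Longrightarrow> x \<notin> S \<Longrightarrow> covers S le p q \<Longrightarrow>
    adjunct_of_chains (insert x S) (insert_rel S le x {u. le u p} {v. le q v}) k"
proof (induction arbitrary: p q rule: adj_chains.induct)
  case (base C le)
  have "is_chain (insert x C) (insert_rel C le x {u. le u p} {v. le q v})"
    using chain_insert_cover[OF base.hyps base.prems] .
  then show ?case
    unfolding adjunct_of_chains_def using adj_chains.base by blast
next
  case (step A le k C leC a b)
  interpret chain_adjunct A le C leC a b
    using adj_chains_chain_adjunct[OF step.hyps] .
  have x: "x \<notin> A" "x \<notin> C" using step.prems(1) by auto
  show ?case
  proof (cases "covers A le p q")
    case True
    have pq: "p \<in> A" "q \<in> A" using covers_in[OF True] by auto
    obtain R0 where R0: "adj_chains (insert x A) R0 k"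
        "agree_on (insert x A) R0 (insert_rel A le x {u. le u p} {v. le q v})"
      using step.IH[OF x(1) True] unfolding adjunct_of_chains_iff by blast
    have "agree_on (insert x (A \<union> C)) (adjunct_rel (insert x A) R0 C leC a b)
        (insert_rel (A \<union> C) R x {u. R u p} {v. R q v})"
      by (rule agree_on_adjunct_insert_left[OF disjoint x a_in b_in R0(2)])
        (use pq R_AA R_CA R_AC in auto)
    then show ?thesis
      unfolding adjunct_of_chains_iff
      using adj_chains_adjunct_insert_left[OF step.hyps _ R0] step.prems(1) by blast
  next
    case False
    show ?thesis by (rule adjunct_of_chains_insert_cover_in_chain[OF step.hyps(1) x step.prems(2) False])
  qed
qed

lemma adjunct_of_chains_adjoin_point:
  assumes "adj_chains S le k" "x \<notin> S" "p \<in> S" "q \<in> S" "le p q" "p \<noteq> q" "\<not> covers S le p q"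
  shows "adjunct_of_chains (insert x S) (insert_rel S le x {u. le u p} {v. le q v}) (Suc k)"
proof -
  have "is_chain {x} (\<lambda>_ _. True)" by (rule is_chain_singleton) simp
  then have "adj_chains (S \<union> {x}) (adjunct_rel S le {x} (\<lambda>_ _. True) p q) (Suc k)"
    using adj_chains.step[OF assms(1)] assms(2-7) by blast
  moreover have "agree_on (insert x S) (adjunct_rel S le {x} (\<lambda>_ _. True) p q)
      (insert_rel S le x {u. le u p} {v. le q v})"
    using assms(2) unfolding agree_on_def adjunct_rel_def insert_rel_def by auto
  ultimately show ?thesis unfolding adjunct_of_chains_iff by auto
qed

lemma adjunct_of_chains_cong:
  "adjunct_of_chains S le k \<Longrightarrow> agree_on S le le' \<Longrightarrow> adjunct_of_chains S le' k"
  unfolding adjunct_of_chains_def agree_on_def by auto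

lemma agree_on_insert_rel:
  assumes "x \<notin> S" "agree_on S R le" "le x x"
    "\<forall>u\<in>S. le u x \<longleftrightarrow> u \<in> D" "\<forall>v\<in>S. le x v \<longleftrightarrow> v \<in> U"
  shows "agree_on (insert x S) (insert_rel S R x D U) le"
  using assms unfolding agree_on_def insert_rel_def by auto

section \<open>Dismantlable lattices are adjuncts of chains\<close>

lemma is_lub_unique: "partial_order_on' S le \<Longrightarrow> is_lub S le u v z \<Longrightarrow> is_lub S le u v z' \<Longrightarrow> z = z'"
  unfolding is_lub_def using po_antisym by metis

lemma is_lub_subset: "is_lub A le u v z \<Longrightarrow> S \<subseteq> A \<Longrightarrow> z \<in> S \<Longrightarrow> is_lub S le u v z"
  unfolding is_lub_def by blast

lemma sublattice_lub:
  assumes "finite_lattice A le" "sublattice A le S" "x \<in> S" "y \<in> S"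
  obtains z where "is_lub A le x y z" "is_lub S le x y z"
proof -
  have S: "S \<subseteq> A" using assms(2) unfolding sublattice_def by blast
  obtain z where z: "is_lub A le x y z" using assms S unfolding finite_lattice_def by blast
  then have "z \<in> S" using assms(2-4) unfolding sublattice_def by blast
  then show ?thesis using that z is_lub_subset[OF z S] by blast
qed

lemma sublattice_glb:
  "finite_lattice A le \<Longrightarrow> sublattice A le S \<Longrightarrow> x \<in> S \<Longrightarrow> y \<in> S \<Longrightarrow>
    (\<And>z. is_glb A le x y z \<Longrightarrow> is_glb S le x y z \<Longrightarrow> thesis) \<Longrightarrow> thesis"
  using sublattice_lub[of A "le\<inverse>\<inverse>" S x y] by simp metis

lemma finite_lattice_sublattice:
  assumes fl: "finite_lattice A le" and sl: "sublattice A le S" and ne: "S \<noteq> {}"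
  shows "finite_lattice S le"
proof -
  have S: "S \<subseteq> A" using sl unfolding sublattice_def by blast
  have "finite S" "partial_order_on' S le"
    using fl S finite_subset po_subset unfolding finite_lattice_def by blast+
  moreover have "\<forall>x\<in>S. \<forall>y\<in>S. (\<exists>z. is_lub S le x y z) \<and> (\<exists>z. is_glb S le x y z)"
    using sublattice_lub[OF fl sl] sublattice_glb[OF fl sl] by metis
  ultimately show ?thesis using ne unfolding finite_lattice_def by blast
qed

lemma sublattice_subset_lub_closed:
  assumes fl: "finite_lattice A le" and S: "sublattice A le S" and T: "sublattice A le T"
    and TS: "T \<subseteq> S" and xy: "x \<in> T" "y \<in> T" and z: "is_lub S le x y z"
  shows "z \<in> T"
proof -
  obtain z' where z': "is_lub A le x y z'" "is_lub S le x y z'"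
    using sublattice_lub[OF fl S] xy TS by blast
  have "partial_order_on' S le"
    using fl S po_subset unfolding finite_lattice_def sublattice_def by blast
  then have "z = z'" using is_lub_unique z z'(2) by metis
  then show ?thesis using T xy z'(1) unfolding sublattice_def by blast
qed

lemma sublattice_subset:
  assumes "finite_lattice A le" "sublattice A le S" "sublattice A le T" "T \<subseteq> S"
  shows "sublattice S le T"
  unfolding sublattice_def
proof (intro conjI ballI allI impI)
  fix x y z assume "x \<in> T" "y \<in> T"
  then show "is_lub S le x y z \<Longrightarrow> z \<in> T"
    using sublattice_subset_lub_closed[OF assms] by blast
  show "is_glb S le x y z \<Longrightarrow> z \<in> T"
    using sublattice_subset_lub_closed[of A "le\<inverse>\<inverse>" S T x y z] assms \<open>x \<in> T\<close> \<open>y \<in> T\<close> by simp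
qed (rule assms(4))

lemma lower_cover_unique_sublattice:
  assumes fl: "finite_lattice A le" and sl: "sublattice A le (A - {x})"
    and p: "covers A le p x" and p': "covers A le p' x"
  shows "p = p'"
proof -
  have in_L: "p \<in> A - {x}" "p' \<in> A - {x}" and "x \<in> A"
    using covers_in[OF p] covers_in[OF p'] covers_le[OF p] covers_le[OF p'] by auto
  obtain z where z: "is_lub A le p p' z" "is_lub (A - {x}) le p p' z"
    using sublattice_lub[OF fl sl in_L] .
  then have "z = p \<or> z = x" "z \<noteq> x"
    using covers_between[OF p] covers_le[OF p] covers_le[OF p'] \<open>x \<in> A\<close>
    unfolding is_lub_def by blast+
  then have "le p' p" using z(1) unfolding is_lub_def by blast
  then show ?thesis
    using covers_between[OF p'] covers_in[OF p] covers_le[OF p] by blast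
qed

lemma upper_cover_unique_sublattice:
  "finite_lattice A le \<Longrightarrow> sublattice A le (A - {x}) \<Longrightarrow> covers A le x q \<Longrightarrow> covers A le x q' \<Longrightarrow>
    q = q'"
  using lower_cover_unique_sublattice[of A "le\<inverse>\<inverse>" x q q'] by simp

lemma lower_cover_exists_lattice:
  assumes fl: "finite_lattice A le" and "x \<in> A" "y \<in> A" "\<not> le x y"
  obtains p where "covers A le p x"
proof -
  have fin: "finite A" and po: "partial_order_on' A le"
    using fl unfolding finite_lattice_def by blast+
  obtain g where "is_glb A le x y g" using fl assms(2,3) unfolding finite_lattice_def by blast
  then have "g \<in> A" "le g x" "g \<noteq> x" using assms(4) unfolding is_glb_def by blast+
  then show ?thesis using lower_cover_exists[OF fin po _ assms(2)] that by blast
qed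

lemma upper_cover_exists_lattice:
  assumes "finite_lattice A le" "x \<in> A" "y \<in> A" "\<not> le y x"
  obtains q where "covers A le x q"
proof -
  have "finite_lattice A le\<inverse>\<inverse>" "\<not> le\<inverse>\<inverse> x y" using assms by simp_all
  then obtain q where "covers A le\<inverse>\<inverse> q x" using lower_cover_exists_lattice assms(2,3) by metis
  then show ?thesis using that by simp
qed

lemma le_iff_le_unique_lower_cover:
  assumes fin: "finite A" and po: "partial_order_on' A le"
    and cov: "covers A le p x" and unique: "\<And>p'. covers A le p' x \<Longrightarrow> p' = p"
    and u: "u \<in> A" "u \<noteq> x"
  shows "le u x \<longleftrightarrow> le u p"
proof
  assume "le u x"
  then obtain p' where "le u p'" "covers A le p' x"
    using lower_cover_exists[OF fin po u(1) _ _ u(2)] covers_in[OF cov] by blast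
  then show "le u p" using unique by blast
next
  assume "le u p"
  then show "le u x" using po_trans[OF po u(1)] covers_in[OF cov] covers_le[OF cov] by blast
qed

lemma le_iff_le_unique_upper_cover:
  assumes "finite A" "partial_order_on' A le" "covers A le x q" "\<And>q'. covers A le x q' \<Longrightarrow> q' = q"
    "u \<in> A" "u \<noteq> x"
  shows "le x u \<longleftrightarrow> le q u"
proof -
  have "le\<inverse>\<inverse> u x \<longleftrightarrow> le\<inverse>\<inverse> u q"
  proof (rule le_iff_le_unique_lower_cover[of A "le\<inverse>\<inverse>" q x u])
    fix p' assume "covers A le\<inverse>\<inverse> p' x"
    then show "p' = q" using assms(4) by simp
  qed (use assms(1-3,5,6) in simp_all)
  then show ?thesis by simp
qed

lemma le_iff_between_covers_sublattice:
  assumes fl: "finite_lattice A le" and sl: "sublattice A le (A - {x})"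
    and p: "covers A le p x" and q: "covers A le x q" and u: "u \<in> A - {x}"
  shows "le u x \<longleftrightarrow> le u p" and "le x u \<longleftrightarrow> le q u"
proof -
  have fin: "finite A" and po: "partial_order_on' A le"
    using fl unfolding finite_lattice_def by blast+
  show "le u x \<longleftrightarrow> le u p"
    using le_iff_le_unique_lower_cover[OF fin po p lower_cover_unique_sublattice[OF fl sl _ p]] u
    by blast
  show "le x u \<longleftrightarrow> le q u"
    using le_iff_le_unique_upper_cover[OF fin po q upper_cover_unique_sublattice[OF fl sl _ q]] u
    by blast
qed

lemma adjunct_of_chains_extend:
  assumes fl: "finite_lattice A le" and sl: "sublattice A le (A - {x})" and x: "x \<in> A"
    and adj: "adjunct_of_chains (A - {x}) le k"
  shows "\<exists>k'. adjunct_of_chains A le k'"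
proof -
  define L where "L = A - {x}"
  have po: "partial_order_on' A le" using fl unfolding finite_lattice_def by blast
  have A: "A = insert x L" and xL: "x \<notin> L" using x unfolding L_def by blast+
  obtain R where R: "adj_chains L R k" "agree_on L R le"
    using adj unfolding adjunct_of_chains_iff L_def by blast
  have incomparable: "\<not> (le u x \<and> le x u)" if "u \<in> L" for u
    using that xL po_antisym[OF po _ x] unfolding L_def by blast
  have agree: "agree_on A (insert_rel L R x D U) le"
    if "\<forall>u\<in>L. le u x \<longleftrightarrow> u \<in> D" "\<forall>v\<in>L. le x v \<longleftrightarrow> v \<in> U" for D U
    unfolding A using agree_on_insert_rel[OF xL R(2) po_refl[OF po x] that] .
  consider (extreme) D U where "(D = L \<and> U = {}) \<or> (D = {} \<and> U = L)"
      "\<forall>u\<in>L. le u x \<longleftrightarrow> u \<in> D" "\<forall>v\<in>L. le x v \<longleftrightarrow> v \<in> U"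
    | (between) y1 y2 where "y1 \<in> L" "\<not> le x y1" "y2 \<in> L" "\<not> le y2 x"
  proof (cases "(\<forall>y\<in>L. le x y) \<or> (\<forall>y\<in>L. le y x)")
    case True
    then show thesis using extreme[of "{}" L] extreme[of L "{}"] incomparable by blast
  qed blast
  then show ?thesis
  proof cases
    case extreme
    then have "adjunct_of_chains A (insert_rel L R x D U) k"
      using adjunct_of_chains_insert_extreme[OF R(1) xL] A by simp
    then show ?thesis using adjunct_of_chains_cong agree[OF extreme(2,3)] by blast
  next
    case between
    then obtain p q where p: "covers A le p x" and q: "covers A le x q"
      using lower_cover_exists_lattice[OF fl x] upper_cover_exists_lattice[OF fl x]
      unfolding L_def by (metis Diff_iff)
    have pq: "p \<in> L" "q \<in> L" "le p q" "p \<noteq> q"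
      using covers_in[OF p] covers_in[OF q] covers_le[OF p] covers_le[OF q]
        po_trans[OF po _ x] incomparable unfolding L_def by blast+
    have "\<forall>u\<in>L. le u x \<longleftrightarrow> R u p" "\<forall>v\<in>L. le x v \<longleftrightarrow> R q v"
      using le_iff_between_covers_sublattice[OF fl sl p q] R(2) pq(1,2)
      unfolding L_def agree_on_def by blast+
    then have "agree_on A (insert_rel L R x {u. R u p} {v. R q v}) le"
      using agree by simp
    moreover have "R p q" using R(2) pq unfolding agree_on_def by blast
    then have "\<exists>k'. adjunct_of_chains A (insert_rel L R x {u. R u p} {v. R q v}) k'"
      using adjunct_of_chains_insert_cover[OF R(1) xL] adjunct_of_chains_adjoin_point[OF R(1) xL]
        pq A by blast
    ultimately show ?thesis using adjunct_of_chains_cong by blast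
  qed
qed

lemma psubset_card_Suc_obtain:
  assumes "S \<subset> T" "finite T" "card T = Suc (card S)"
  obtains x where "x \<in> T" "T - {x} = S"
proof -
  have "finite S" using assms(1,2) finite_subset psubset_imp_subset by blast
  then have "card (T - S) = 1" using assms by (simp add: card_Diff_subset)
  then obtain x where "T - S = {x}" by (rule card_1_singletonE)
  then show ?thesis using that assms(1) by blast
qed

lemma dismantlable_adjunct_of_chains:
  assumes "dismantlable A le"
  shows "\<exists>k. adjunct_of_chains A le k"
proof -
  have fl: "finite_lattice A le" using assms unfolding dismantlable_def by blast
  obtain L :: "nat \<Rightarrow> 'a set" where
    L: "\<forall>i\<in>{1..card A}. sublattice A le (L i) \<and> card (L i) = i"
      "\<forall>i. 1 \<le> i \<and> i < card A \<longrightarrow> L i \<subset> L (Suc i)" "L (card A) = A"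
    using assms unfolding dismantlable_def by blast
  have "\<exists>k. adjunct_of_chains (L i) le k" if "1 \<le> i" "i \<le> card A" for i
    using that
  proof (induction i rule: nat_induct_at_least)
    case base
    then have "1 \<in> {1..card A}" by simp
    then have sl: "sublattice A le (L 1)" and "card (L 1) = 1" using L(1) by blast+
    from \<open>card (L 1) = 1\<close> obtain y where y: "L 1 = {y}" by (rule card_1_singletonE)
    then have "y \<in> A" using sl unfolding sublattice_def by blast
    then have "le y y" using fl po_refl[of A le y] unfolding finite_lattice_def by blast
    then have "adj_chains (L 1) le 0" unfolding y by (intro adj_chains.base is_chain_singleton)
    then show ?case unfolding adjunct_of_chains_def by blast
  next
    case (Suc i)
    then have "i \<in> {1..card A}" "Suc i \<in> {1..card A}" by auto
    then have sl: "sublattice A le (L i)" "sublattice A le (L (Suc i))"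
      and cards: "card (L i) = i" "card (L (Suc i)) = Suc i"
      using L(1) by blast+
    have sub: "L i \<subset> L (Suc i)" using L(2) Suc by simp
    obtain k where k: "adjunct_of_chains (L i) le k" using Suc by auto
    have "finite (L (Suc i))" using cards(2) card.infinite by fastforce
    then obtain x where x: "x \<in> L (Suc i)" and Li: "L (Suc i) - {x} = L i"
      using psubset_card_Suc_obtain[OF sub] cards by metis
    have "L (Suc i) \<noteq> {}" using x by blast
    then have "finite_lattice (L (Suc i)) le" by (rule finite_lattice_sublattice[OF fl sl(2)])
    moreover have "sublattice (L (Suc i)) le (L i)"
      using sublattice_subset[OF fl sl(2,1)] sub by blast
    ultimately show ?case using adjunct_of_chains_extend[OF _ _ x] k unfolding Li by blast
  qed
  moreover have "1 \<le> card A" using fl unfolding finite_lattice_def by (simp add: Suc_le_eq card_gt_0_iff)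
  ultimately show ?thesis using L(3) by force
qed

theorem mainTheorem2:
  fixes A :: "'a set" and le :: "'a \<Rightarrow> 'a \<Rightarrow> bool" and r :: nat
  assumes "dismantlable A le"
  shows "nullity A le = int r \<longleftrightarrow> adjunct_of_chains A le r"
proof -
  have fl: "finite_lattice A le" using assms by (simp add: dismantlable_def)
  obtain k where k: "adjunct_of_chains A le k"
    using dismantlable_adjunct_of_chains[OF assms] by blast
  then have "nullity A le = int k" by (rule nullity_adjunct_of_chains[OF fl])
  show ?thesis
  proof
    assume "nullity A le = int r"
    then show "adjunct_of_chains A le r" using k \<open>nullity A le = int k\<close> by simp
  next
    assume "adjunct_of_chains A le r"
    then show "nullity A le = int r" by (rule nullity_adjunct_of_chains[OF fl])
  qed
qed

end
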